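(* Let $H_n=\sum_{i=1}^{M(n)}\mathcal J_i h_i$ be a random commuting local Hamiltonian whose coefficients $\mathcal J_i$ are i.i.d. $(R,\delta)$-digitalizations of $\mathcal N(0,1)$, and let $\{\lambda_k\}$ be its eigenvalues indexed by the common eigenbasis. Take $R=\mathrm{poly}(n)$, $\delta=O(1/(e^{\beta n}M(n)))$, and $\beta>0$ sufficiently large. Then $$\Pr\Big(\min_{k\neq k'}|\lambda_k-\lambda_{k'}|\le 2^{-\beta n}\Big)=\mathrm{negl}(n),$$ and the digitalization uses $\mathrm{poly}(n)$ bits in total.
   Context: Fix $d\ge1$ and a finite set $\mathcal T$ of Hermitian operators on at most $d$ qubits, each with non-degenerate spectrum. For each $n$, choose $M(n)=\Theta(n)$ templates and supports so that $h_i=(h^{(\alpha_i)})_{S_i}\otimes I_{[n]\setminus S_i}$ form a complete set of commuting observables. This means they pairwise commute and the tuple of their eigenvalues on a common eigenvector uniquely determines that eigenvector. $(R,\delta)$-digitalization, with $R/\delta$ an odd integer: a Gaussian $\mathcal J$ is mapped to $k\delta$ when $\mathcal J\in((k-\frac12)\delta,(k+\frac12)\delta]$, to $-R$ when $\mathcal J\le-R+\delta/2$, and to $R$ when $\mathcal J>R-\delta/2$. $\mathrm{negl}(n)$ denotes a function smaller than any inverse polynomial. *)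

theory Defs
  imports "HOL-Probability.Probability" "HOL-Library.Landau_Symbols"
begin

text \<open>Operators on N-dimensional spaces are represented as functions
  nat => nat => complex, of which only the entries with indices < N matter;
  vectors as nat => complex, only entries < N matter.
  The n-qubit space has N = 2^n, basis index x, and bit q of x is the state of qubit q.\<close>

type_synonym cmat = "nat \<Rightarrow> nat \<Rightarrow> complex"
type_synonym cvec = "nat \<Rightarrow> complex"

definition bitof :: "nat \<Rightarrow> nat \<Rightarrow> nat" where
  "bitof x q = (x div 2 ^ q) mod 2"

definition mmul :: "nat \<Rightarrow> cmat \<Rightarrow> cmat \<Rightarrow> cmat" where
  "mmul N A B = (\<lambda>i j. \<Sum>k<N. A i k * B k j)"

definition mvec :: "nat \<Rightarrow> cmat \<Rightarrow> cvec \<Rightarrow> cvec" where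
  "mvec N A v = (\<lambda>i. \<Sum>k<N. A i k * v k)"

definition mat_eq :: "nat \<Rightarrow> cmat \<Rightarrow> cmat \<Rightarrow> bool" where
  "mat_eq N A B \<longleftrightarrow> (\<forall>i<N. \<forall>j<N. A i j = B i j)"

definition hermitian_op :: "nat \<Rightarrow> cmat \<Rightarrow> bool" where
  "hermitian_op N A \<longleftrightarrow> (\<forall>i<N. \<forall>j<N. A i j = cnj (A j i))"

definition eigvec :: "nat \<Rightarrow> cmat \<Rightarrow> complex \<Rightarrow> cvec \<Rightarrow> bool" where
  "eigvec N A a v \<longleftrightarrow> (\<exists>i<N. v i \<noteq> 0) \<and> (\<forall>i<N. mvec N A v i = a * v i)"

definition parallel :: "nat \<Rightarrow> cvec \<Rightarrow> cvec \<Rightarrow> bool" where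
  "parallel N v w \<longleftrightarrow> (\<exists>c. \<forall>i<N. w i = c * v i)"

definition nondegenerate :: "nat \<Rightarrow> cmat \<Rightarrow> bool" where
  "nondegenerate N A \<longleftrightarrow> (\<forall>a v w. eigvec N A a v \<and> eigvec N A a w \<longrightarrow> parallel N v w)"

text \<open>Local embedding (A)_S tensor I on n qubits: S is the list of (distinct) qubits on which
  the template A (acting on length S qubits) acts; qubit S!t is the t-th tensor factor of A.\<close>
definition restr :: "nat list \<Rightarrow> nat \<Rightarrow> nat" where
  "restr S x = (\<Sum>t<length S. bitof x (S ! t) * 2 ^ t)"

definition embed :: "nat \<Rightarrow> nat list \<Rightarrow> cmat \<Rightarrow> cmat" where
  "embed n S A = (\<lambda>x y. if (\<forall>q<n. q \<notin> set S \<longrightarrow> bitof x q = bitof y q)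
                         then A (restr S x) (restr S y) else 0)"

definition common_eigvec :: "nat \<Rightarrow> nat \<Rightarrow> (nat \<Rightarrow> cmat) \<Rightarrow> cvec \<Rightarrow> bool" where
  "common_eigvec N M h v \<longleftrightarrow> (\<exists>a. \<forall>i<M. eigvec N (h i) (a i) v)"

definition CSCO :: "nat \<Rightarrow> nat \<Rightarrow> (nat \<Rightarrow> cmat) \<Rightarrow> bool" where
  "CSCO N M h \<longleftrightarrow>
     (\<forall>i<M. \<forall>j<M. mat_eq N (mmul N (h i) (h j)) (mmul N (h j) (h i))) \<and>
     (\<forall>a v w. (\<forall>i<M. eigvec N (h i) (a i) v) \<and> (\<forall>i<M. eigvec N (h i) (a i) w)
              \<longrightarrow> parallel N v w)"

definition digitalize :: "real \<Rightarrow> real \<Rightarrow> real \<Rightarrow> real" where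
  "digitalize R \<delta> x =
     (if x \<le> - R + \<delta> / 2 then - R
      else if x > R - \<delta> / 2 then R
      else \<delta> * of_int \<lceil>x / \<delta> - 1 / 2\<rceil>)"

definition dig_gauss :: "real \<Rightarrow> real \<Rightarrow> real measure" where
  "dig_gauss R \<delta> = distr (density lborel std_normal_density) borel (digitalize R \<delta>)"

text \<open>Number of bits used to store M digitalized coefficients
  (each takes one of 2R/delta + 1 values).\<close>
definition digit_bits :: "nat \<Rightarrow> real \<Rightarrow> real \<Rightarrow> real" where
  "digit_bits M R \<delta> = real M * of_int \<lceil>log 2 (2 * R / \<delta> + 1)\<rceil>"

definition negl :: "(nat \<Rightarrow> real) \<Rightarrow> bool" where
  "negl f \<longleftrightarrow> (\<forall>k::nat. eventually (\<lambda>n. real n ^ k * \<bar>f n\<bar> < 1) at_top)"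

definition poly_bounded :: "(nat \<Rightarrow> real) \<Rightarrow> bool" where
  "poly_bounded f \<longleftrightarrow> (\<exists>k::nat. f \<in> O(\<lambda>n. real n ^ k))"

definition is_poly_growth :: "(nat \<Rightarrow> real) \<Rightarrow> bool" where
  "is_poly_growth f \<longleftrightarrow> (\<exists>c>0. \<exists>C. eventually (\<lambda>n. real n powr c \<le> f n \<and> f n \<le> real n powr C) at_top)"

definition hamiltonian :: "nat \<Rightarrow> (nat \<Rightarrow> cmat) \<Rightarrow> (nat \<Rightarrow> real) \<Rightarrow> cmat" where
  "hamiltonian M h J = (\<lambda>x y. \<Sum>i<M. complex_of_real (J i) * h i x y)"

text \<open>Gap event: two eigenvalues of H, attached to two distinct (non-parallel) elements of
  the common eigenbasis of the h_i, are within eps.\<close>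
definition small_gap :: "nat \<Rightarrow> nat \<Rightarrow> (nat \<Rightarrow> cmat) \<Rightarrow> real \<Rightarrow> (nat \<Rightarrow> real) \<Rightarrow> bool" where
  "small_gap N M h eps J \<longleftrightarrow>
     (\<exists>v w \<mu> \<nu>. common_eigvec N M h v \<and> common_eigvec N M h w \<and> \<not> parallel N v w \<and>
        eigvec N (hamiltonian M h J) \<mu> v \<and> eigvec N (hamiltonian M h J) \<nu> w \<and>
        cmod (\<mu> - \<nu>) \<le> eps)"

end

(* The eigenvalues of an embedded template are eigenvalues of the template itself, so all
   eigenvalues of all h_i lie in one finite set E, independent of n.  Distinct elements of the
   common eigenbasis carry distinct eigenvalue tuples a, b, and their energies differ by
   sum_i J_i (a_i - b_i).  For a fixed nonzero coefficient vector c = a - b pick i0 with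
   c_i0 <> 0, so |c_i0| >= g for a separation constant g of E; after fixing all other
   coefficients, a gap below eps forces J_i0 into an interval of length 2 eps / g, which an
   unclipped digitalized Gaussian hits with probability at most 2 eps / g + delta.  A union
   bound over the card (E - E) ^ M = exp (O n) coefficient vectors, plus M times the
   probability that a coefficient is clipped to +-R, bounds the gap probability.  For beta
   large, 2 ^ (- beta n) and delta beat exp (O n); the clipping term decays faster than any
   polynomial because R grows polynomially and the Gaussian has all moments.  Finally
   2 R / delta = exp (O n), so the M coefficients need O(n) bits each. *)

theory Submission
  imports Defs "Jordan_Normal_Form.Char_Poly" "HOL-Real_Asymp.Real_Asymp"
begin

section \<open>Eigenvalues of local operators\<close>

lemma finite_eigenvalues: "finite {a. \<exists>u. eigvec N A a u}"
proof -
  define B where "B = mat N N (\<lambda>(i, j). A i j)"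
  have B: "B \<in> carrier_mat N N" unfolding B_def by simp
  have "eigenvalue B a" if u: "eigvec N A a u" for a u
    unfolding eigenvalue_def eigenvector_def
  proof (intro exI conjI)
    show "vec N u \<in> carrier_vec (dim_row B)" using B by simp
    obtain i where "i < N" "u i \<noteq> 0" using u unfolding eigvec_def by blast
    then have "vec N u $ i \<noteq> 0\<^sub>v N $ i" by simp
    then show "vec N u \<noteq> 0\<^sub>v (dim_row B)" using B by auto
    show "B *\<^sub>v vec N u = a \<cdot>\<^sub>v vec N u"
    proof (rule eq_vecI)
      fix i assume "i < dim_vec (a \<cdot>\<^sub>v vec N u)"
      then have i: "i < N" by simp
      have "(B *\<^sub>v vec N u) $ i = mvec N A u i"
        using i B unfolding B_def mvec_def by (simp add: scalar_prod_def atLeast0LessThan)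
      then show "(B *\<^sub>v vec N u) $ i = (a \<cdot>\<^sub>v vec N u) $ i"
        using i u unfolding eigvec_def by simp
    qed (use B in simp)
  qed
  then have "{a. \<exists>u. eigvec N A a u} \<subseteq> {a. poly (char_poly B) a = 0}"
    using eigenvalue_root_char_poly[OF B] by blast
  moreover have "char_poly B \<noteq> 0"
    using degree_monic_char_poly[OF B] by auto
  ultimately show ?thesis using poly_roots_finite finite_subset by blast
qed

lemma bit_imp_less_of_less_pow2: "(z::nat) < 2 ^ n \<Longrightarrow> bit z q \<Longrightarrow> q < n"
  by (metis bit_take_bit_iff take_bit_nat_eq_self_iff)

lemma bitof_eq_of_bool_bit: "bitof x q = of_bool (bit x q)"
  by (simp add: bitof_def bit_iff_odd mod_2_eq_odd)

lemma restr_eq_horner_sum: "restr S z = horner_sum of_bool 2 (map (\<lambda>t. bit z (S ! t)) [0..<length S])"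
  unfolding restr_def horner_sum_eq_sum by (simp add: atLeast0LessThan bitof_eq_of_bool_bit)

lemma bit_restr: "bit (restr S z) t \<longleftrightarrow> t < length S \<and> bit z (S ! t)"
  by (auto simp: restr_eq_horner_sum bit_horner_sum_bit_iff)

lemma restr_less: "restr S z < 2 ^ length S"
  using horner_sum_of_bool_2_less[of "map (\<lambda>t. bit z (S ! t)) [0..<length S]"]
  by (simp add: restr_eq_horner_sum)

definition same_outside :: "nat \<Rightarrow> nat list \<Rightarrow> nat \<Rightarrow> nat \<Rightarrow> bool" where
  "same_outside n S x z \<longleftrightarrow> (\<forall>q<n. q \<notin> set S \<longrightarrow> bit x q = bit z q)"

lemma embed_eq: "embed n S A x y = (if same_outside n S x y then A (restr S x) (restr S y) else 0)"
  unfolding embed_def same_outside_def bitof_eq_of_bool_bit of_bool_eq_iff by (rule refl)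

text \<open>The basis index that carries the local index r on the qubits of S and agrees with x
  on all other qubits.\<close>
definition fill :: "nat \<Rightarrow> nat list \<Rightarrow> nat \<Rightarrow> nat \<Rightarrow> nat" where
  "fill n S x r = horner_sum of_bool 2
     (map (\<lambda>q. if q \<in> set S then \<exists>t<length S. S ! t = q \<and> bit r t else bit x q) [0..<n])"

lemma bit_fill:
  "bit (fill n S x r) q \<longleftrightarrow>
     q < n \<and> (if q \<in> set S then \<exists>t<length S. S ! t = q \<and> bit r t else bit x q)"
  by (cases "q < n") (simp_all add: fill_def bit_horner_sum_bit_iff)

lemma fill_less: "fill n S x r < 2 ^ n"
  using horner_sum_of_bool_2_less[of
      "map (\<lambda>q. if q \<in> set S then \<exists>t<length S. S ! t = q \<and> bit r t else bit x q) [0..<n]"]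
  by (simp add: fill_def)

lemma same_outside_fill: "same_outside n S x (fill n S x r)"
  by (simp add: same_outside_def bit_fill)

lemma restr_fill:
  assumes "distinct S" "set S \<subseteq> {..<n}" "r < 2 ^ length S"
  shows "restr S (fill n S x r) = r"
proof (rule bit_eqI)
  fix t
  show "bit (restr S (fill n S x r)) t \<longleftrightarrow> bit r t"
  proof (cases "t < length S")
    case True
    then have "S ! t \<in> set S" by simp
    moreover from this have "S ! t < n" using assms(2) by blast
    moreover have "(\<exists>t'<length S. S ! t' = S ! t \<and> bit r t') \<longleftrightarrow> bit r t"
      using True assms(1) by (auto simp: nth_eq_iff_index_eq)
    ultimately show ?thesis using True by (simp add: bit_restr bit_fill)
  next
    case False
    then show ?thesis using bit_imp_less_of_less_pow2[OF assms(3)] by (auto simp: bit_restr)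
  qed
qed

lemma fill_restr:
  assumes "z < 2 ^ n" "same_outside n S x z"
  shows "fill n S x (restr S z) = z"
proof (rule bit_eqI)
  fix q
  show "bit (fill n S x (restr S z)) q \<longleftrightarrow> bit z q"
  proof (cases "q < n \<and> q \<in> set S")
    case True
    then have "(\<exists>t<length S. S ! t = q \<and> bit (restr S z) t) \<longleftrightarrow> bit z q"
      by (auto simp: bit_restr in_set_conv_nth)
    then show ?thesis using True by (simp add: bit_fill)
  next
    case False
    then show ?thesis
      using assms bit_imp_less_of_less_pow2[OF assms(1)] by (auto simp: bit_fill same_outside_def)
  qed
qed

lemma bij_betw_fill:
  assumes "distinct S" "set S \<subseteq> {..<n}"
  shows "bij_betw (fill n S x) {..<2 ^ length S} {z \<in> {..<2 ^ n}. same_outside n S x z}"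
  by (rule bij_betw_byWitness[where f'="restr S"])
     (use assms restr_fill fill_restr fill_less same_outside_fill restr_less in auto)

lemma mvec_embed_fill:
  assumes "distinct S" "set S \<subseteq> {..<n}" "s < 2 ^ length S"
  shows "mvec (2 ^ n) (embed n S A) v (fill n S x s) = mvec (2 ^ length S) A (\<lambda>r. v (fill n S x r)) s"
proof -
  have same: "same_outside n S (fill n S x s) w \<longleftrightarrow> same_outside n S x w" for w
    using same_outside_fill[of n S x s] by (auto simp: same_outside_def)
  have "mvec (2 ^ n) (embed n S A) v (fill n S x s)
      = (\<Sum>w<2 ^ n. if same_outside n S x w then A s (restr S w) * v w else 0)"
    unfolding mvec_def embed_eq same restr_fill[OF assms] by (intro sum.cong) simp_all
  also have "\<dots> = (\<Sum>w\<in>{z \<in> {..<2 ^ n}. same_outside n S x z}. A s (restr S w) * v w)"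
    by (rule sum.inter_filter[symmetric]) simp
  also have "\<dots> = (\<Sum>r<2 ^ length S. A s (restr S (fill n S x r)) * v (fill n S x r))"
    using sum.reindex_bij_betw[OF bij_betw_fill[OF assms(1,2)], of "\<lambda>w. A s (restr S w) * v w"]
    by simp
  also have "\<dots> = mvec (2 ^ length S) A (\<lambda>r. v (fill n S x r)) s"
    using restr_fill[OF assms(1,2)] by (simp add: mvec_def)
  finally show ?thesis .
qed

text \<open>Restricting v to the basis states that agree outside S with some x where v x \<noteq> 0
  gives an eigenvector of the template.\<close>
lemma eigvec_embed_imp_eigvec:
  assumes "distinct S" "set S \<subseteq> {..<n}" and ev: "eigvec (2 ^ n) (embed n S A) a v"
  shows "\<exists>u. eigvec (2 ^ length S) A a u"
proof -
  obtain x where x: "x < 2 ^ n" "v x \<noteq> 0" using ev unfolding eigvec_def by blast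
  have "eigvec (2 ^ length S) A a (\<lambda>r. v (fill n S x r))"
    unfolding eigvec_def
  proof (intro conjI allI impI)
    have "fill n S x (restr S x) = x"
      using fill_restr[OF x(1)] by (simp add: same_outside_def)
    then show "\<exists>r<2 ^ length S. v (fill n S x r) \<noteq> 0"
      using x(2) restr_less[of S x] by (intro exI[of _ "restr S x"]) simp
  next
    fix s :: nat assume "s < 2 ^ length S"
    then have "mvec (2 ^ length S) A (\<lambda>r. v (fill n S x r)) s
        = mvec (2 ^ n) (embed n S A) v (fill n S x s)"
      by (rule mvec_embed_fill[OF assms(1,2), symmetric])
    also have "\<dots> = a * v (fill n S x s)"
      using ev fill_less unfolding eigvec_def by blast
    finally show "mvec (2 ^ length S) A (\<lambda>r. v (fill n S x r)) s = a * v (fill n S x s)" .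
  qed
  then show ?thesis by blast
qed

lemma hamiltonian_eigenvalue:
  assumes ev: "\<And>i. i < M \<Longrightarrow> eigvec N (h i) (a i) v"
    and evH: "eigvec N (hamiltonian M h J) \<mu> v"
  shows "\<mu> = (\<Sum>i<M. complex_of_real (J i) * a i)"
proof -
  obtain k where k: "k < N" "v k \<noteq> 0" using evH unfolding eigvec_def by blast
  have "\<mu> * v k = mvec N (hamiltonian M h J) v k" using evH k unfolding eigvec_def by simp
  also have "\<dots> = (\<Sum>i<M. complex_of_real (J i) * mvec N (h i) v k)"
    unfolding mvec_def hamiltonian_def
    by (simp add: sum_distrib_left sum_distrib_right mult.assoc sum.swap[where A = "{..<N}"])
  also have "\<dots> = (\<Sum>i<M. complex_of_real (J i) * a i) * v k"
    using ev k unfolding eigvec_def by (simp add: sum_distrib_right mult.assoc)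
  finally show ?thesis using k by simp
qed

definition small_combination :: "complex set \<Rightarrow> nat \<Rightarrow> real \<Rightarrow> (nat \<Rightarrow> real) \<Rightarrow> bool" where
  "small_combination D M \<epsilon> J \<longleftrightarrow>
     (\<exists>c. (\<forall>i<M. c i \<in> D) \<and> (\<exists>i<M. c i \<noteq> 0) \<and> cmod (\<Sum>i<M. complex_of_real (J i) * c i) \<le> \<epsilon>)"

lemma small_gap_imp_small_combination:
  assumes csco: "CSCO N M h"
    and spec: "\<And>i a v. i < M \<Longrightarrow> eigvec N (h i) a v \<Longrightarrow> a \<in> E"
    and gap: "small_gap N M h \<epsilon> J"
  shows "small_combination {a - b |a b. a \<in> E \<and> b \<in> E} M \<epsilon> J"
proof -
  obtain v w \<mu> \<nu> where "common_eigvec N M h v" "common_eigvec N M h w" "\<not> parallel N v w"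
      and \<mu>: "eigvec N (hamiltonian M h J) \<mu> v" and \<nu>: "eigvec N (hamiltonian M h J) \<nu> w"
      and close: "cmod (\<mu> - \<nu>) \<le> \<epsilon>"
    using gap unfolding small_gap_def by blast
  then obtain a b where a: "\<And>i. i < M \<Longrightarrow> eigvec N (h i) (a i) v"
      and b: "\<And>i. i < M \<Longrightarrow> eigvec N (h i) (b i) w"
    unfolding common_eigvec_def by blast
  have "\<exists>i<M. a i - b i \<noteq> 0"
  proof (rule ccontr)
    assume "\<not> (\<exists>i<M. a i - b i \<noteq> 0)"
    then have "\<forall>i<M. eigvec N (h i) (a i) w" using b by simp
    then have "parallel N v w" using csco a unfolding CSCO_def by blast
    with \<open>\<not> parallel N v w\<close> show False ..
  qed
  moreover have "\<mu> - \<nu> = (\<Sum>i<M. complex_of_real (J i) * (a i - b i))"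
    using hamiltonian_eigenvalue[OF a \<mu>] hamiltonian_eigenvalue[OF b \<nu>]
    by (simp add: sum_subtractf right_diff_distrib)
  moreover have "a i - b i \<in> {a - b |a b. a \<in> E \<and> b \<in> E}" if "i < M" for i
    using spec a b that by blast
  ultimately show ?thesis
    unfolding small_combination_def using close by (intro exI[of _ "\<lambda>i. a i - b i"]) simp
qed

lemma small_gap_imp_small_combination_of_templates:
  fixes T :: "(nat \<times> cmat) set" and M :: "nat \<Rightarrow> nat"
    and \<alpha> :: "nat \<Rightarrow> nat \<Rightarrow> nat \<times> cmat" and S :: "nat \<Rightarrow> nat \<Rightarrow> nat list"
  assumes T: "finite T"
    and templ: "\<And>n i. n \<ge> 1 \<Longrightarrow> i < M n \<Longrightarrow> \<alpha> n i \<in> T"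
    and supp: "\<And>n i. n \<ge> 1 \<Longrightarrow> i < M n \<Longrightarrow>
                 distinct (S n i) \<and> set (S n i) \<subseteq> {..<n} \<and> length (S n i) = fst (\<alpha> n i)"
    and csco: "\<And>n. n \<ge> 1 \<Longrightarrow> CSCO (2 ^ n) (M n) (\<lambda>i. embed n (S n i) (snd (\<alpha> n i)))"
  obtains D where "finite D"
    "\<And>n \<epsilon> J. n \<ge> 1 \<Longrightarrow> small_gap (2 ^ n) (M n) (\<lambda>i. embed n (S n i) (snd (\<alpha> n i))) \<epsilon> J \<Longrightarrow>
       small_combination D (M n) \<epsilon> J"
proof
  define E where "E = (\<Union>(m, A)\<in>T. {a. \<exists>u. eigvec (2 ^ m) A a u})"
  have "finite E" unfolding E_def using T finite_eigenvalues by auto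
  then show "finite {a - b |a b. a \<in> E \<and> b \<in> E}" by (intro finite_image_set2) simp_all
  fix n :: nat and \<epsilon> :: real and J :: "nat \<Rightarrow> real" assume n: "n \<ge> 1"
  have "a \<in> E" if i: "i < M n" and ev: "eigvec (2 ^ n) (embed n (S n i) (snd (\<alpha> n i))) a v" for i a v
  proof -
    obtain u where "eigvec (2 ^ fst (\<alpha> n i)) (snd (\<alpha> n i)) a u"
      using eigvec_embed_imp_eigvec[of "S n i" n] supp[OF n i] ev by metis
    then show ?thesis using templ[OF n i] unfolding E_def by (auto intro!: bexI[of _ "\<alpha> n i"])
  qed
  then show "small_gap (2 ^ n) (M n) (\<lambda>i. embed n (S n i) (snd (\<alpha> n i))) \<epsilon> J \<Longrightarrow>
      small_combination {a - b |a b. a \<in> E \<and> b \<in> E} (M n) \<epsilon> J"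
    using small_gap_imp_small_combination[OF csco[OF n]] by blast
qed

section \<open>Digitalized Gaussians\<close>

lemma measurable_digitalize [measurable]: "digitalize R \<delta> \<in> borel_measurable borel"
  unfolding digitalize_def by measurable

lemma prob_space_dig_gauss: "prob_space (dig_gauss R \<delta>)"
proof -
  have "prob_space (density lborel std_normal_density)" by (rule prob_space_normal_density) simp
  then show ?thesis unfolding dig_gauss_def by (rule prob_space.prob_space_distr) simp
qed

lemma sets_dig_gauss [measurable_cong]: "sets (dig_gauss R \<delta>) = sets borel"
  by (simp add: dig_gauss_def)

lemma digitalize_unclipped:
  assumes "\<delta> > 0" "- R + \<delta> / 2 < x" "x \<le> R - \<delta> / 2"
  shows "- R < digitalize R \<delta> x \<and> digitalize R \<delta> x < R \<and> \<bar>digitalize R \<delta> x - x\<bar> \<le> \<delta> / 2"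
proof -
  define c where "c = \<lceil>x / \<delta> - 1 / 2\<rceil>"
  have "x / \<delta> - 1 / 2 \<le> c" "c < x / \<delta> + 1 / 2"
    unfolding c_def by linarith+
  then have "x - \<delta> / 2 \<le> \<delta> * c" "\<delta> * c < x + \<delta> / 2"
    using assms(1) by (simp_all add: field_simps)
  moreover have "digitalize R \<delta> x = \<delta> * c"
    using assms(2,3) by (simp add: digitalize_def c_def)
  ultimately show ?thesis using assms(2,3) unfolding abs_le_iff by linarith
qed

lemma abs_ge_of_digitalize_clipped:
  assumes "\<delta> > 0" "digitalize R \<delta> x \<in> {R, - R}"
  shows "R - \<delta> / 2 \<le> \<bar>x\<bar>"
  using digitalize_unclipped[OF assms(1), of R x] assms(2) by force

lemma abs_digitalize_diff_le:
  assumes "\<delta> > 0" "digitalize R \<delta> x \<notin> {R, - R}"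
  shows "\<bar>digitalize R \<delta> x - x\<bar> \<le> \<delta> / 2"
proof -
  have "- R + \<delta> / 2 < x" "x \<le> R - \<delta> / 2"
    using assms(2) unfolding digitalize_def by (auto split: if_splits)
  then show ?thesis using digitalize_unclipped[OF assms(1)] by blast
qed

lemma std_normal_density_le_1: "std_normal_density x \<le> 1"
proof -
  have "1 \<le> sqrt (2 * pi)" using pi_gt3 by (simp add: real_le_rsqrt)
  then have "1 / sqrt (2 * pi) \<le> 1" by simp
  moreover have "exp (- x\<^sup>2 / 2) \<le> 1" by simp
  ultimately show ?thesis
    unfolding std_normal_density_def by (intro mult_le_one) auto
qed

lemma emeasure_std_normal_Icc_le:
  assumes "a \<le> b"
  shows "emeasure (density lborel std_normal_density) {a..b} \<le> ennreal (b - a)"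
proof -
  have "emeasure (density lborel std_normal_density) {a..b}
      = (\<integral>\<^sup>+x. ennreal (std_normal_density x) * indicator {a..b} x \<partial>lborel)"
    by (simp add: emeasure_density)
  also have "\<dots> \<le> (\<integral>\<^sup>+x. indicator {a..b} x \<partial>lborel)"
    by (intro nn_integral_mono) (auto simp: indicator_def std_normal_density_le_1)
  also have "\<dots> = ennreal (b - a)" using assms by simp
  finally show ?thesis .
qed

text \<open>Markov's inequality for the 2k-th moment fact (2 k) / (2 ^ k fact k).\<close>
lemma emeasure_std_normal_tail_le:
  assumes "t > 0"
  shows "emeasure (density lborel std_normal_density) {x. t \<le> \<bar>x\<bar>}
           \<le> ennreal (fact (2 * k) / (2 ^ k * fact k) / t ^ (2 * k))"
proof -
  let ?m = "\<lambda>x. std_normal_density x * x ^ (2 * k) / t ^ (2 * k)"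
  have moment: "has_bochner_integral lborel ?m (fact (2 * k) / (2 ^ k * fact k) / t ^ (2 * k))"
    using has_bochner_integral_divide_zero[OF std_normal_moment_even] .
  have "emeasure (density lborel std_normal_density) {x. t \<le> \<bar>x\<bar>}
      = (\<integral>\<^sup>+x. ennreal (std_normal_density x) * indicator {x. t \<le> \<bar>x\<bar>} x \<partial>lborel)"
    by (simp add: emeasure_density)
  also have "\<dots> \<le> (\<integral>\<^sup>+x. ennreal (?m x) \<partial>lborel)"
  proof (intro nn_integral_mono)
    fix x
    have "t ^ (2 * k) \<le> x ^ (2 * k)" if "t \<le> \<bar>x\<bar>"
      using power_mono[OF that, of "2 * k"] assms by (simp add: power_mult power2_abs)
    then have "std_normal_density x \<le> ?m x" if "t \<le> \<bar>x\<bar>"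
      using that assms by (simp add: field_simps mult_left_mono)
    then show "ennreal (std_normal_density x) * indicator {x. t \<le> \<bar>x\<bar>} x \<le> ennreal (?m x)"
      by (auto simp: indicator_def)
  qed
  also have "\<dots> = ennreal (fact (2 * k) / (2 ^ k * fact k) / t ^ (2 * k))"
  proof -
    have "0 \<le> ?m x" for x
      using assms by (simp add: power_mult)
    then show ?thesis
      using moment by (simp add: has_bochner_integral_iff nn_integral_eq_integral)
  qed
  finally show ?thesis .
qed

lemma emeasure_dig_gauss_unclipped_Icc_le:
  assumes "\<delta> > 0" "a \<le> b"
  shows "emeasure (dig_gauss R \<delta>) ({a..b} - {R, - R}) \<le> ennreal (b - a + \<delta>)"
proof -
  have "emeasure (dig_gauss R \<delta>) ({a..b} - {R, - R})
      = emeasure (density lborel std_normal_density) (digitalize R \<delta> -` ({a..b} - {R, - R}))"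
    unfolding dig_gauss_def by (simp add: emeasure_distr)
  also have "\<dots> \<le> emeasure (density lborel std_normal_density) {a - \<delta> / 2 .. b + \<delta> / 2}"
  proof (rule emeasure_mono)
    show "digitalize R \<delta> -` ({a..b} - {R, - R}) \<subseteq> {a - \<delta> / 2 .. b + \<delta> / 2}"
    proof
      fix y assume "y \<in> digitalize R \<delta> -` ({a..b} - {R, - R})"
      then have "digitalize R \<delta> y \<in> {a..b}" "\<bar>digitalize R \<delta> y - y\<bar> \<le> \<delta> / 2"
        using abs_digitalize_diff_le[OF assms(1)] by auto
      then show "y \<in> {a - \<delta> / 2 .. b + \<delta> / 2}" unfolding abs_le_iff by simp
    qed
  qed simp
  also have "\<dots> \<le> ennreal (b - a + \<delta>)"
    using emeasure_std_normal_Icc_le[of "a - \<delta> / 2" "b + \<delta> / 2"] assms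
    by (simp add: algebra_simps)
  finally show ?thesis .
qed

lemma measure_dig_gauss_clipped_le:
  assumes "\<delta> > 0" "R - \<delta> / 2 > 0"
  shows "measure (dig_gauss R \<delta>) {R, - R} \<le> fact (2 * k) / (2 ^ k * fact k) / (R - \<delta> / 2) ^ (2 * k)"
proof -
  interpret prob_space "dig_gauss R \<delta>" by (rule prob_space_dig_gauss)
  have "emeasure (dig_gauss R \<delta>) {R, - R}
      = emeasure (density lborel std_normal_density) (digitalize R \<delta> -` {R, - R})"
    unfolding dig_gauss_def by (simp add: emeasure_distr)
  also have "\<dots> \<le> emeasure (density lborel std_normal_density) {x. R - \<delta> / 2 \<le> \<bar>x\<bar>}"
    by (rule emeasure_mono) (use abs_ge_of_digitalize_clipped[OF assms(1)] in auto)
  also have "\<dots> \<le> ennreal (fact (2 * k) / (2 ^ k * fact k) / (R - \<delta> / 2) ^ (2 * k))"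
    by (rule emeasure_std_normal_tail_le[OF assms(2)])
  finally show ?thesis by (simp add: emeasure_eq_measure ennreal_le_iff)
qed

lemma measure_dig_gauss_clipped_poly_decay:
  fixes c :: real and q :: nat
  assumes c: "c > 0"
  obtains B where "\<And>n R \<delta>. n \<ge> 1 \<Longrightarrow> real n powr c \<le> R \<Longrightarrow> 0 < \<delta> \<Longrightarrow> \<delta> \<le> 1 \<Longrightarrow>
                     measure (dig_gauss R \<delta>) {R, - R} \<le> B / real n ^ q"
proof -
  define k where "k = nat \<lceil>real q / (2 * c)\<rceil>"
  define m :: real where "m = fact (2 * k) / (2 ^ k * fact k)"
  have "real q / (2 * c) \<le> real k" unfolding k_def by linarith
  then have kc: "real q \<le> real (2 * k) * c" using c by (simp add: divide_le_eq mult_ac)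
  show thesis
  proof (rule that[of "m * 4 ^ k"])
    fix n :: nat and R \<delta> :: real assume n: "n \<ge> 1" "real n powr c \<le> R" and \<delta>: "0 < \<delta>" "\<delta> \<le> 1"
    have "1 \<le> real n powr c" using n c by (simp add: ge_one_powr_ge_zero)
    then have R\<delta>: "0 < R - \<delta> / 2" "real n powr c / 2 \<le> R - \<delta> / 2" using n(2) \<delta> by linarith+
    have "real n ^ q / 4 ^ k = real n powr real q / 4 ^ k"
      using n by (simp add: powr_realpow)
    also have "\<dots> \<le> real n powr (real (2 * k) * c) / 4 ^ k"
      using n kc by (intro divide_right_mono powr_mono) auto
    also have "\<dots> = (real n powr c / 2) ^ (2 * k)"
    proof -
      have "(4::real) ^ k = 2 ^ (2 * k)" by (simp add: power_mult)
      then show ?thesis using n by (simp add: power_divide powr_power mult_ac)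
    qed
    also have "\<dots> \<le> (R - \<delta> / 2) ^ (2 * k)"
      using R\<delta> n c by (intro power_mono) auto
    finally have pow: "real n ^ q / 4 ^ k \<le> (R - \<delta> / 2) ^ (2 * k)" .
    have "measure (dig_gauss R \<delta>) {R, - R} \<le> m / (R - \<delta> / 2) ^ (2 * k)"
      unfolding m_def using \<delta>(1) R\<delta>(1) by (rule measure_dig_gauss_clipped_le)
    also have "\<dots> \<le> m / (real n ^ q / 4 ^ k)"
      using pow n R\<delta>(1) by (intro divide_left_mono mult_pos_pos) (auto simp: m_def)
    also have "\<dots> = m * 4 ^ k / real n ^ q" by simp
    finally show "measure (dig_gauss R \<delta>) {R, - R} \<le> m * 4 ^ k / real n ^ q" .
  qed
qed

section \<open>Anti-concentration of linear forms\<close>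

lemma emeasure_PiM_le_sections:
  fixes \<mu> :: "'a measure"
  assumes \<mu>: "prob_space \<mu>" and I: "finite I" "i \<in> I" and A: "A \<in> sets (PiM I (\<lambda>_. \<mu>))"
    and slice: "\<And>X. X \<in> space (PiM (I - {i}) (\<lambda>_. \<mu>)) \<Longrightarrow>
                    emeasure \<mu> {y \<in> space \<mu>. X(i := y) \<in> A} \<le> p"
  shows "emeasure (PiM I (\<lambda>_. \<mu>)) A \<le> p"
proof -
  interpret \<mu>: prob_space \<mu> by fact
  define P' where "P' = PiM (I - {i}) (\<lambda>_. \<mu>)"
  interpret P': prob_space P' unfolding P'_def by (intro prob_space_PiM \<mu>)
  interpret pair_sigma_finite \<mu> P' by unfold_locales
  define upd where "upd = (\<lambda>(y, X). X(i := y) :: _ \<Rightarrow> 'a)"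
  have "upd = (\<lambda>z. (snd z)(i := fst z))" by (auto simp: upd_def)
  then have upd: "upd \<in> measurable (\<mu> \<Otimes>\<^sub>M P') (PiM I (\<lambda>_. \<mu>))"
    unfolding P'_def using I(2) by (auto intro!: measurable_fun_upd[where J = "I - {i}"])
  have "PiM I (\<lambda>_. \<mu>) = distr (\<mu> \<Otimes>\<^sub>M P') (PiM I (\<lambda>_. \<mu>)) upd"
    using distr_pair_PiM_eq_PiM[of "I - {i}" "\<lambda>_. \<mu>" i] I(2) \<mu>
    unfolding upd_def P'_def by (simp add: insert_absorb)
  then have "emeasure (PiM I (\<lambda>_. \<mu>)) A = emeasure (\<mu> \<Otimes>\<^sub>M P') (upd -` A \<inter> space (\<mu> \<Otimes>\<^sub>M P'))"
    using A upd by (metis emeasure_distr)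
  also have "\<dots> = (\<integral>\<^sup>+X. emeasure \<mu> ((\<lambda>y. (y, X)) -` (upd -` A \<inter> space (\<mu> \<Otimes>\<^sub>M P'))) \<partial>P')"
    using A upd by (intro emeasure_pair_measure_alt2) simp
  also have "\<dots> \<le> (\<integral>\<^sup>+X. p \<partial>P')"
  proof (rule nn_integral_mono)
    fix X assume "X \<in> space P'"
    then have "(\<lambda>y. (y, X)) -` (upd -` A \<inter> space (\<mu> \<Otimes>\<^sub>M P')) = {y \<in> space \<mu>. X(i := y) \<in> A}"
      by (auto simp: upd_def space_pair_measure)
    then show "emeasure \<mu> ((\<lambda>y. (y, X)) -` (upd -` A \<inter> space (\<mu> \<Otimes>\<^sub>M P'))) \<le> p"
      using slice \<open>X \<in> space P'\<close> unfolding P'_def by simp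
  qed
  also have "\<dots> = p" using P'.emeasure_space_1 by simp
  finally show ?thesis .
qed

lemma abs_affine_le_subset_Icc:
  fixes x :: real assumes "x \<noteq> 0"
  shows "{y. \<bar>y * x + t\<bar> \<le> \<epsilon>} \<subseteq> {- t / x - \<epsilon> / \<bar>x\<bar> .. - t / x + \<epsilon> / \<bar>x\<bar>}"
proof
  fix y assume "y \<in> {y. \<bar>y * x + t\<bar> \<le> \<epsilon>}"
  moreover have "\<bar>y * x + t\<bar> = \<bar>x\<bar> * \<bar>y - - t / x\<bar>"
    using assms by (simp add: abs_mult[symmetric] algebra_simps)
  ultimately have "\<bar>y - - t / x\<bar> \<le> \<epsilon> / \<bar>x\<bar>"
    using assms by (simp add: pos_le_divide_eq mult.commute)
  then show "y \<in> {- t / x - \<epsilon> / \<bar>x\<bar> .. - t / x + \<epsilon> / \<bar>x\<bar>}"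
    by (simp add: abs_le_iff)
qed

lemma sets_PiM_small_linear_form:
  fixes x :: "nat \<Rightarrow> real" and \<mu> :: "real measure"
  assumes "sets \<mu> = sets borel" "i0 < M" "B \<in> sets borel"
  shows "{J \<in> space (PiM {..<M} (\<lambda>_. \<mu>)). J i0 \<notin> B \<and> \<bar>\<Sum>i<M. J i * x i\<bar> \<le> \<epsilon>}
           \<in> sets (PiM {..<M} (\<lambda>_. \<mu>))"
proof -
  have [measurable_cong]: "sets \<mu> = sets borel" and [measurable]: "B \<in> sets borel"
    using assms by simp_all
  have "insert i0 {..<M} = {..<M}" using assms(2) by auto
  moreover have "{J \<in> space (PiM (insert i0 {..<M}) (\<lambda>_. \<mu>)). J i0 \<notin> B \<and>
      \<bar>\<Sum>i\<in>insert i0 {..<M}. J i * x i\<bar> \<le> \<epsilon>} \<in> sets (PiM (insert i0 {..<M}) (\<lambda>_. \<mu>))"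
    by measurable
  ultimately show ?thesis by simp
qed

lemma emeasure_PiM_unclipped_small_linear_form_le:
  fixes x :: "nat \<Rightarrow> real"
  assumes \<delta>: "\<delta> > 0" and \<epsilon>: "\<epsilon> \<ge> 0" and i0: "i0 < M" and x0: "x i0 \<noteq> 0"
  shows "emeasure (PiM {..<M} (\<lambda>_. dig_gauss R \<delta>))
           {J \<in> space (PiM {..<M} (\<lambda>_. dig_gauss R \<delta>)).
              J i0 \<notin> {R, - R} \<and> \<bar>\<Sum>i<M. J i * x i\<bar> \<le> \<epsilon>}
         \<le> ennreal (2 * \<epsilon> / \<bar>x i0\<bar> + \<delta>)"
    (is "emeasure ?P ?A \<le> _")
proof (rule emeasure_PiM_le_sections[OF prob_space_dig_gauss])
  show "?A \<in> sets ?P"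
    using i0 by (intro sets_PiM_small_linear_form) (simp_all add: sets_dig_gauss)
  fix X assume X: "X \<in> space (PiM ({..<M} - {i0}) (\<lambda>_. dig_gauss R \<delta>))"
  define t where "t = (\<Sum>i\<in>{..<M} - {i0}. X i * x i)"
  define lo where "lo = - t / x i0 - \<epsilon> / \<bar>x i0\<bar>"
  have space: "space (dig_gauss R \<delta>) = UNIV"
    using sets_eq_imp_space_eq[OF sets_dig_gauss] by simp
  have "X(i0 := y) \<in> space ?P" for y
    using X i0 by (auto simp: space_PiM space PiE_iff extensional_def)
  moreover have "(\<Sum>i<M. (X(i0 := y)) i * x i) = y * x i0 + t" for y
  proof -
    have "(\<Sum>i\<in>{..<M} - {i0}. (X(i0 := y)) i * x i) = t"
      unfolding t_def by (intro sum.cong) auto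
    then show ?thesis using i0 by (simp add: sum.remove[of "{..<M}" i0])
  qed
  ultimately have "{y \<in> space (dig_gauss R \<delta>). X(i0 := y) \<in> ?A} \<subseteq> {lo .. lo + 2 * \<epsilon> / \<bar>x i0\<bar>} - {R, - R}"
    using abs_affine_le_subset_Icc[OF x0, of t \<epsilon>] unfolding lo_def by auto
  then have "emeasure (dig_gauss R \<delta>) {y \<in> space (dig_gauss R \<delta>). X(i0 := y) \<in> ?A}
      \<le> emeasure (dig_gauss R \<delta>) ({lo .. lo + 2 * \<epsilon> / \<bar>x i0\<bar>} - {R, - R})"
    by (rule emeasure_mono) (simp add: sets_dig_gauss)
  also have "\<dots> \<le> ennreal (2 * \<epsilon> / \<bar>x i0\<bar> + \<delta>)"
    using emeasure_dig_gauss_unclipped_Icc_le[OF \<delta>, of lo "lo + 2 * \<epsilon> / \<bar>x i0\<bar>" R] \<epsilon> by simp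
  finally show "emeasure (dig_gauss R \<delta>) {y \<in> space (dig_gauss R \<delta>). X(i0 := y) \<in> ?A}
      \<le> ennreal (2 * \<epsilon> / \<bar>x i0\<bar> + \<delta>)" .
qed (use i0 in auto)

text \<open>Rotate by the phase of c i0 and take real parts.\<close>
lemma real_projection_of_complex_combination:
  fixes c :: "nat \<Rightarrow> complex"
  assumes "c i0 \<noteq> 0"
  obtains x :: "nat \<Rightarrow> real" where "x i0 = cmod (c i0)"
    and "\<And>J. \<bar>\<Sum>i<M. J i * x i\<bar> \<le> cmod (\<Sum>i<M. complex_of_real (J i) * c i)"
proof -
  define u where "u = cnj (c i0) / cmod (c i0)"
  show thesis
  proof (rule that[of "\<lambda>i. Re (u * c i)"])
    have "cnj (c i0) * c i0 = (complex_of_real (cmod (c i0)))\<^sup>2"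
      by (simp add: complex_norm_square[symmetric] mult.commute)
    then show "Re (u * c i0) = cmod (c i0)"
      using assms by (simp add: u_def power2_eq_square)
  next
    fix J :: "nat \<Rightarrow> real"
    have "(\<Sum>i<M. J i * Re (u * c i)) = Re (u * (\<Sum>i<M. complex_of_real (J i) * c i))"
      by (simp add: sum_distrib_left Re_sum algebra_simps)
    then have "\<bar>\<Sum>i<M. J i * Re (u * c i)\<bar> \<le> cmod (u * (\<Sum>i<M. complex_of_real (J i) * c i))"
      using abs_Re_le_cmod by metis
    also have "\<dots> = cmod (\<Sum>i<M. complex_of_real (J i) * c i)"
      using assms by (simp add: u_def norm_mult norm_divide)
    finally show "\<bar>\<Sum>i<M. J i * Re (u * c i)\<bar> \<le> cmod (\<Sum>i<M. complex_of_real (J i) * c i)" .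
  qed
qed

lemma finite_nonzero_norm_lower_bound:
  fixes D :: "'a::real_normed_vector set"
  assumes "finite D"
  obtains g where "g > 0" "\<And>z. z \<in> D \<Longrightarrow> z \<noteq> 0 \<Longrightarrow> g \<le> norm z"
proof
  let ?N = "insert 1 (norm ` (D - {0}))"
  have "finite ?N" using assms by simp
  then show "Min ?N > 0" by (subst Min_gr_iff) auto
  show "Min ?N \<le> norm z" if "z \<in> D" "z \<noteq> 0" for z
    using \<open>finite ?N\<close> that by (intro Min_le) auto
qed

lemma measure_PiM_unclipped_small_combination_le:
  fixes c :: "nat \<Rightarrow> complex" and M :: nat and R \<delta> :: real
  defines "P \<equiv> PiM {..<M} (\<lambda>_. dig_gauss R \<delta>)"
  assumes \<delta>: "\<delta> > 0" and \<epsilon>: "\<epsilon> \<ge> 0" and i0: "i0 < M" "c i0 \<noteq> 0" and g: "0 < g" "g \<le> cmod (c i0)"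
  shows "measure P {J \<in> space P. (\<forall>i<M. J i \<notin> {R, - R}) \<and>
           cmod (\<Sum>i<M. complex_of_real (J i) * c i) \<le> \<epsilon>} \<le> 2 * \<epsilon> / g + \<delta>"
proof -
  interpret prob_space P unfolding P_def by (intro prob_space_PiM prob_space_dig_gauss)
  obtain x where x: "x i0 = cmod (c i0)"
    and x_le: "\<And>J. \<bar>\<Sum>i<M. J i * x i\<bar> \<le> cmod (\<Sum>i<M. complex_of_real (J i) * c i)"
    using real_projection_of_complex_combination[of c i0 M] i0(2) by blast
  have "emeasure P {J \<in> space P. (\<forall>i<M. J i \<notin> {R, - R}) \<and>
           cmod (\<Sum>i<M. complex_of_real (J i) * c i) \<le> \<epsilon>}
      \<le> emeasure P {J \<in> space P. J i0 \<notin> {R, - R} \<and> \<bar>\<Sum>i<M. J i * x i\<bar> \<le> \<epsilon>}"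
    using i0(1) x_le order_trans unfolding P_def
    by (intro emeasure_mono sets_PiM_small_linear_form sets_dig_gauss) auto
  also have "\<dots> \<le> ennreal (2 * \<epsilon> / \<bar>x i0\<bar> + \<delta>)"
    unfolding P_def using i0(2) x by (intro emeasure_PiM_unclipped_small_linear_form_le[OF \<delta> \<epsilon> i0(1)]) simp
  also have "\<dots> \<le> ennreal (2 * \<epsilon> / g + \<delta>)"
    using g \<epsilon> x by (intro ennreal_leI add_right_mono divide_left_mono mult_pos_pos) auto
  finally show ?thesis
    using g(1) \<epsilon> \<delta> by (simp add: emeasure_eq_measure ennreal_le_iff del: ennreal_plus)
qed

lemma small_combination_cases:
  assumes "small_combination D M \<epsilon> J"
  obtains i where "i < M" "J i \<in> {R, - R}"
  | c where "c \<in> PiE {..<M} (\<lambda>_. D)" "\<exists>i<M. c i \<noteq> 0" "\<forall>i<M. J i \<notin> {R, - R}"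
      "cmod (\<Sum>i<M. complex_of_real (J i) * c i) \<le> \<epsilon>"
proof (cases "\<exists>i<M. J i \<in> {R, - R}")
  case True
  then show ?thesis using that(1) by blast
next
  case False
  obtain c where c: "\<forall>i<M. c i \<in> D" "\<exists>i<M. c i \<noteq> 0" "cmod (\<Sum>i<M. complex_of_real (J i) * c i) \<le> \<epsilon>"
    using assms unfolding small_combination_def by blast
  have "restrict c {..<M} \<in> PiE {..<M} (\<lambda>_. D)" "\<exists>i<M. restrict c {..<M} i \<noteq> 0"
    using c(1,2) by auto
  moreover have "(\<Sum>i<M. complex_of_real (J i) * restrict c {..<M} i) = (\<Sum>i<M. complex_of_real (J i) * c i)"
    by simp
  ultimately show ?thesis using False c(3) by (intro that(2)[of "restrict c {..<M}"]) simp_all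
qed

lemma measure_PiM_dig_gauss_clipped_coordinate:
  assumes "i < M"
  shows "measure (PiM {..<M} (\<lambda>_. dig_gauss R \<delta>))
           {J \<in> space (PiM {..<M} (\<lambda>_. dig_gauss R \<delta>)). J i \<in> {R, - R}}
         = measure (dig_gauss R \<delta>) {R, - R}"
proof -
  interpret product_prob_space "\<lambda>_. dig_gauss R \<delta>" "{..<M}"
    by (intro product_prob_spaceI prob_space_dig_gauss)
  show ?thesis
    using assms unfolding measure_def by (subst emeasure_PiM_Collect_single) (auto simp: sets_dig_gauss)
qed

lemma measure_small_combination_le:
  fixes D :: "complex set" and M :: nat and R \<delta> \<epsilon> g :: real
  defines "P \<equiv> PiM {..<M} (\<lambda>_. dig_gauss R \<delta>)"
  assumes D: "finite D" and g: "g > 0" "\<And>z. z \<in> D \<Longrightarrow> z \<noteq> 0 \<Longrightarrow> g \<le> cmod z"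
    and \<delta>: "\<delta> > 0" and \<epsilon>: "\<epsilon> \<ge> 0" and X: "X \<subseteq> {J \<in> space P. small_combination D M \<epsilon> J}"
  shows "measure P X
           \<le> real M * measure (dig_gauss R \<delta>) {R, - R} + real (card D) ^ M * (2 * \<epsilon> / g + \<delta>)"
proof -
  interpret prob_space P unfolding P_def by (intro prob_space_PiM prob_space_dig_gauss)
  define clipped where "clipped i = {J \<in> space P. J i \<in> {R, - R}}" for i
  define near where "near c = {J \<in> space P. (\<forall>i<M. J i \<notin> {R, - R}) \<and>
      cmod (\<Sum>i<M. complex_of_real (J i) * c i) \<le> \<epsilon>}" for c
  define C where "C = {c \<in> PiE {..<M} (\<lambda>_. D). \<exists>i<M. c i \<noteq> 0}"
  have C_sub: "C \<subseteq> PiE {..<M} (\<lambda>_. D)" unfolding C_def by blast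
  have fin: "finite (PiE {..<M} (\<lambda>_. D))" using D by (simp add: finite_PiE)
  have C: "finite C" "real (card C) \<le> real (card D) ^ M"
    using finite_subset[OF C_sub fin] card_mono[OF fin C_sub] by (simp_all add: card_PiE flip: of_nat_power)
  have [measurable]: "{R, - R} \<in> sets borel" by simp
  have clipped_sets: "clipped i \<in> sets P" if "i < M" for i
    unfolding clipped_def P_def using that
    by (intro measurable_sets_Collect[OF measurable_component_singleton]) (auto simp: sets_dig_gauss)
  have near_sets: "near c \<in> sets P" for c
    unfolding near_def P_def by measurable
  have near_le: "measure P (near c) \<le> 2 * \<epsilon> / g + \<delta>" if "c \<in> C" for c
  proof -
    obtain i0 where "i0 < M" "c i0 \<noteq> 0" "c i0 \<in> D" using \<open>c \<in> C\<close> unfolding C_def by blast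
    then show ?thesis
      unfolding near_def P_def using g by (intro measure_PiM_unclipped_small_combination_le \<delta> \<epsilon>) auto
  qed
  have "X \<subseteq> (\<Union>i<M. clipped i) \<union> (\<Union>c\<in>C. near c)"
  proof
    fix J assume "J \<in> X"
    then have J: "J \<in> space P" "small_combination D M \<epsilon> J" using X by auto
    from J(2) show "J \<in> (\<Union>i<M. clipped i) \<union> (\<Union>c\<in>C. near c)"
      by (cases rule: small_combination_cases[where R = R])
         (use J(1) in \<open>auto simp: clipped_def near_def C_def\<close>)
  qed
  then have "measure P X \<le> measure P ((\<Union>i<M. clipped i) \<union> (\<Union>c\<in>C. near c))"
    using clipped_sets near_sets C(1) by (intro finite_measure_mono sets.Un sets.finite_UN) auto
  also have "\<dots> \<le> (\<Sum>i<M. measure P (clipped i)) + (\<Sum>c\<in>C. measure P (near c))"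
    using clipped_sets near_sets C(1)
    by (intro order.trans[OF measure_Un_le] add_mono measure_UNION_le) auto
  also have "\<dots> \<le> (\<Sum>i<M. measure (dig_gauss R \<delta>) {R, - R}) + (\<Sum>c\<in>C. 2 * \<epsilon> / g + \<delta>)"
  proof (intro add_mono sum_mono)
    show "measure P (clipped i) \<le> measure (dig_gauss R \<delta>) {R, - R}" if "i \<in> {..<M}" for i
      using measure_PiM_dig_gauss_clipped_coordinate[of i M R \<delta>] that unfolding clipped_def P_def by simp
  qed (use near_le in auto)
  also have "\<dots> \<le> real M * measure (dig_gauss R \<delta>) {R, - R} + real (card D) ^ M * (2 * \<epsilon> / g + \<delta>)"
    using C(2) g(1) \<epsilon> \<delta> by (simp add: mult_right_mono)
  finally show ?thesis .
qed

section \<open>Asymptotics\<close>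

lemma negl_mono:
  assumes "negl g" "eventually (\<lambda>n. \<bar>f n\<bar> \<le> g n) at_top"
  shows "negl f"
  unfolding negl_def
proof
  fix k
  show "eventually (\<lambda>n. real n ^ k * \<bar>f n\<bar> < 1) at_top"
    using assms(2) assms(1)[unfolded negl_def, rule_format, of k]
  proof eventually_elim
    case (elim n)
    have "real n ^ k * \<bar>f n\<bar> \<le> real n ^ k * \<bar>g n\<bar>"
      using elim(1) by (intro mult_left_mono) auto
    with elim(2) show ?case by linarith
  qed
qed

lemma negl_add:
  assumes "negl f" "negl g"
  shows "negl (\<lambda>n. f n + g n)"
  unfolding negl_def
proof
  fix k
  show "eventually (\<lambda>n. real n ^ k * \<bar>f n + g n\<bar> < 1) at_top"
    using assms[unfolded negl_def, rule_format, of "Suc k"] eventually_ge_at_top[of 2]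
  proof eventually_elim
    case (elim n)
    have two: "2 \<le> real n" using elim(3) by simp
    have "real n ^ k * \<bar>f n\<bar> * 2 \<le> real n ^ Suc k * \<bar>f n\<bar>"
         "real n ^ k * \<bar>g n\<bar> * 2 \<le> real n ^ Suc k * \<bar>g n\<bar>"
      using mult_left_mono[OF two, of "real n ^ k * \<bar>f n\<bar>"]
        mult_left_mono[OF two, of "real n ^ k * \<bar>g n\<bar>"] by (simp_all add: mult_ac)
    moreover have "real n ^ k * \<bar>f n + g n\<bar> \<le> real n ^ k * \<bar>f n\<bar> + real n ^ k * \<bar>g n\<bar>"
      by (simp add: abs_triangle_ineq mult_left_mono flip: distrib_left)
    ultimately show ?case using elim(1,2) by linarith
  qed
qed

lemma neglI_tendsto:
  assumes "\<And>k. ((\<lambda>n. real n ^ k * \<bar>f n\<bar>) \<longlongrightarrow> 0) at_top"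
  shows "negl f"
  unfolding negl_def by (intro allI order_tendstoD(2)[OF assms]) simp

lemma negl_exp_neg: "negl (\<lambda>n. A * exp (- real n))"
proof (rule neglI_tendsto)
  fix k
  have "((\<lambda>n. \<bar>A\<bar> * (real n ^ k * exp (- real n))) \<longlongrightarrow> 0) at_top" by real_asymp
  then show "((\<lambda>n. real n ^ k * \<bar>A * exp (- real n)\<bar>) \<longlongrightarrow> 0) at_top"
    by (simp add: abs_mult mult_ac)
qed

lemma eventually_le_1_if_bigo_exp_neg:
  fixes \<delta> :: "nat \<Rightarrow> real"
  assumes "\<delta> \<in> O(\<lambda>n. exp (- (\<beta> * real n)))" "\<beta> > 0"
  shows "eventually (\<lambda>n. \<delta> n \<le> 1) at_top"
proof -
  obtain C where C: "eventually (\<lambda>n. norm (\<delta> n) \<le> C * norm (exp (- (\<beta> * real n)))) at_top"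
    using assms(1) by (elim landau_o.bigE)
  have "((\<lambda>n. C * exp (- (\<beta> * real n))) \<longlongrightarrow> 0) at_top" using assms(2) by real_asymp
  then have "eventually (\<lambda>n. C * exp (- (\<beta> * real n)) < 1) at_top" by (rule order_tendstoD) simp
  with C show ?thesis by eventually_elim auto
qed

text \<open>Also for M n = 0, where the left-hand side is 1 / 0 = 0.\<close>
lemma inverse_exp_mult_bigo:
  "(\<lambda>n. 1 / (exp (\<beta> * real n) * real (M n))) \<in> O(\<lambda>n. exp (- (\<beta> * real n)))"
proof (intro bigoI[of _ 1] always_eventually allI)
  fix n
  have "1 / (exp (\<beta> * real n) * real (M n)) \<le> 1 / exp (\<beta> * real n)" if "M n > 0"
    using that by (intro divide_left_mono) auto
  then show "norm (1 / (exp (\<beta> * real n) * real (M n))) \<le> 1 * norm (exp (- (\<beta> * real n)))"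
    by (cases "M n = 0") (auto simp: exp_minus field_simps)
qed

lemma negl_clipping_term:
  fixes M :: "nat \<Rightarrow> nat" and R \<delta> :: "nat \<Rightarrow> real"
  assumes M: "(\<lambda>n. real (M n)) \<in> O(\<lambda>n. real n)" and R: "is_poly_growth R"
    and \<delta>: "\<And>n. \<delta> n > 0" "eventually (\<lambda>n. \<delta> n \<le> 1) at_top"
  shows "negl (\<lambda>n. real (M n) * measure (dig_gauss (R n) (\<delta> n)) {R n, - R n})"
  unfolding negl_def
proof
  fix q
  obtain C1 where M_le: "eventually (\<lambda>n. real (M n) \<le> C1 * real n) at_top"
    using M by (elim landau_o.bigE) auto
  obtain c C where c: "c > 0"
    and R_bounds: "eventually (\<lambda>n. real n powr c \<le> R n \<and> R n \<le> real n powr C) at_top"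
    using R unfolding is_poly_growth_def by blast
  then have R_ge: "eventually (\<lambda>n. real n powr c \<le> R n) at_top" by (auto elim: eventually_mono)
  obtain B where B: "\<And>n R \<delta>. n \<ge> 1 \<Longrightarrow> real n powr c \<le> R \<Longrightarrow> 0 < \<delta> \<Longrightarrow> \<delta> \<le> 1 \<Longrightarrow>
      measure (dig_gauss R \<delta>) {R, - R} \<le> B / real n ^ (q + 2)"
    using measure_dig_gauss_clipped_poly_decay[OF c] by metis
  have "((\<lambda>n. C1 * B / real n) \<longlongrightarrow> 0) at_top" by real_asymp
  then have small: "eventually (\<lambda>n. C1 * B / real n < 1) at_top" by (rule order_tendstoD) simp
  show "eventually (\<lambda>n. real n ^ q *
          \<bar>real (M n) * measure (dig_gauss (R n) (\<delta> n)) {R n, - R n}\<bar> < 1) at_top"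
    using M_le R_ge \<delta>(2) small eventually_ge_at_top[of 1]
  proof eventually_elim
    case (elim n)
    have "real n ^ q * \<bar>real (M n) * measure (dig_gauss (R n) (\<delta> n)) {R n, - R n}\<bar>
        \<le> real n ^ q * (C1 * real n * (B / real n ^ (q + 2)))"
    proof -
      have "real (M n) * measure (dig_gauss (R n) (\<delta> n)) {R n, - R n}
          \<le> C1 * real n * (B / real n ^ (q + 2))"
        using elim(1) B[OF elim(5) elim(2) \<delta>(1) elim(3)] order_trans[OF of_nat_0_le_iff elim(1)]
        by (intro mult_mono) auto
      then show ?thesis by (simp add: mult_left_mono)
    qed
    also have "\<dots> = C1 * B / real n" using elim(5) by (simp add: field_simps)
    finally show ?case using elim(4) by linarith
  qed
qed

lemma combination_term_le:
  fixes K m n :: nat and \<beta> C1 C2 g d :: real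
  assumes m: "real m \<le> C1 * real n" and d: "\<bar>d\<bar> \<le> C2 * exp (- (\<beta> * real n))"
    and \<beta>: "C1 * ln (real K + 1) + 1 \<le> \<beta> * ln 2" "\<beta> > 0" and g: "g > 0"
  shows "\<bar>real K ^ m * (2 * 2 powr (- \<beta> * real n) / g + d)\<bar> \<le> (2 / g + C2) * exp (- real n)"
proof -
  define L where "L = ln (real K + 1)"
  have "real K ^ m \<le> (real K + 1) ^ m" by (intro power_mono) auto
  also have "\<dots> = exp (real m * L)" by (simp add: L_def exp_of_nat_mult)
  also have "\<dots> \<le> exp (C1 * real n * L)" using m by (simp add: L_def mult_right_mono)
  finally have K: "real K ^ m \<le> exp (C1 * real n * L)" .
  have "C2 \<ge> 0" using d by (smt (verit) exp_gt_zero zero_le_mult_iff)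
  have "\<beta> * real n * ln 2 \<le> \<beta> * real n"
    using ln_2_less_1 \<beta>(2) by (intro mult_left_le) auto
  then have "C2 * exp (- (\<beta> * real n)) \<le> C2 * exp (- (\<beta> * real n * ln 2))"
    using \<open>C2 \<ge> 0\<close> by (simp add: mult_left_mono)
  then have "\<bar>2 * 2 powr (- \<beta> * real n) / g + d\<bar> \<le> (2 / g + C2) * exp (- (\<beta> * real n * ln 2))"
    using abs_triangle_ineq[of "2 * 2 powr (- \<beta> * real n) / g" d] d g
    by (simp add: powr_def algebra_simps)
  then have "\<bar>real K ^ m * (2 * 2 powr (- \<beta> * real n) / g + d)\<bar>
      \<le> exp (C1 * real n * L) * ((2 / g + C2) * exp (- (\<beta> * real n * ln 2)))"
    unfolding abs_mult using K by (intro mult_mono) auto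
  also have "\<dots> = (2 / g + C2) * exp (real n * (C1 * L - \<beta> * ln 2))"
    by (simp add: exp_add[symmetric] algebra_simps)
  also have "\<dots> \<le> (2 / g + C2) * exp (- real n)"
  proof -
    have "real n * (C1 * L - \<beta> * ln 2) \<le> real n * (- 1)"
      using \<beta>(1) unfolding L_def by (intro mult_left_mono) auto
    then show ?thesis using g \<open>C2 \<ge> 0\<close> by (intro mult_left_mono) auto
  qed
  finally show ?thesis .
qed

lemma negl_combination_term:
  fixes M :: "nat \<Rightarrow> nat" and K :: nat and g :: real
  assumes M: "(\<lambda>n. real (M n)) \<in> O(\<lambda>n. real n)" and g: "g > 0"
  obtains \<beta>0 where "\<beta>0 > 0"
    "\<And>\<beta> \<delta>. \<beta> \<ge> \<beta>0 \<Longrightarrow> \<delta> \<in> O(\<lambda>n. exp (- (\<beta> * real n))) \<Longrightarrow>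
       negl (\<lambda>n. real K ^ M n * (2 * 2 powr (- \<beta> * real n) / g + \<delta> n))"
proof -
  obtain C1 where C1: "C1 > 0" and M_le: "eventually (\<lambda>n. real (M n) \<le> C1 * real n) at_top"
    using M by (elim landau_o.bigE) auto
  have L: "0 \<le> C1 * ln (real K + 1)" using C1 by simp
  show thesis
  proof (rule that[of "(C1 * ln (real K + 1) + 1) / ln 2"])
    show "(C1 * ln (real K + 1) + 1) / ln 2 > 0" using L by (simp add: add_nonneg_pos)
    fix \<beta> and \<delta> :: "nat \<Rightarrow> real"
    assume "\<beta> \<ge> (C1 * ln (real K + 1) + 1) / ln 2" and \<delta>: "\<delta> \<in> O(\<lambda>n. exp (- (\<beta> * real n)))"
    then have \<beta>: "C1 * ln (real K + 1) + 1 \<le> \<beta> * ln 2" by (simp add: pos_divide_le_eq)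
    with L have "\<beta> > 0" using zero_less_mult_pos2[of \<beta> "ln 2"] by simp
    obtain C2 where \<delta>_le: "eventually (\<lambda>n. \<bar>\<delta> n\<bar> \<le> C2 * exp (- (\<beta> * real n))) at_top"
      using \<delta> by (elim landau_o.bigE) auto
    show "negl (\<lambda>n. real K ^ M n * (2 * 2 powr (- \<beta> * real n) / g + \<delta> n))"
    proof (rule negl_mono[OF negl_exp_neg[of "2 / g + C2"]])
      show "eventually (\<lambda>n. \<bar>real K ^ M n * (2 * 2 powr (- \<beta> * real n) / g + \<delta> n)\<bar>
          \<le> (2 / g + C2) * exp (- real n)) at_top"
        using M_le \<delta>_le by eventually_elim (rule combination_term_le[OF _ _ \<beta> \<open>\<beta> > 0\<close> g])
    qed
  qed
qed

lemma digit_bits_nonneg: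
  assumes "0 < R" "0 < \<delta>"
  shows "0 \<le> digit_bits m R \<delta>"
proof -
  have "1 \<le> 2 * R / \<delta> + 1" using assms by simp
  then have "0 \<le> log 2 (2 * R / \<delta> + 1)" by simp
  then have "0 \<le> real_of_int \<lceil>log 2 (2 * R / \<delta> + 1)\<rceil>" using le_of_int_ceiling order_trans by blast
  then show ?thesis unfolding digit_bits_def by simp
qed

lemma digit_bits_le:
  fixes m n :: nat
  assumes m: "real m \<le> C1 * real n" and R: "0 < R" "R \<le> real n powr C" and \<delta>: "0 < \<delta>"
    and \<delta>_ge: "c2 * (1 / (exp (\<beta> * real n) * real m)) \<le> \<delta>" and c2: "c2 > 0" and \<beta>: "\<beta> \<ge> 0"
    and poly_exp: "2 * real n powr C * (C1 * real n) / c2 + 1 \<le> exp (2 * real n)"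
  shows "digit_bits m R \<delta> \<le> C1 * real n * ((\<beta> + 2) * real n / ln 2 + 1)"
proof (cases "m = 0")
  case True
  then show ?thesis using m \<beta> by (simp add: digit_bits_def)
next
  case False
  define x where "x = 2 * R / \<delta> + 1"
  have x: "1 \<le> x" using R \<delta> unfolding x_def by simp
  have "1 / \<delta> \<le> exp (\<beta> * real n) * real m / c2"
    using \<delta>_ge False c2 \<delta> by (simp add: field_simps)
  also have "\<dots> \<le> exp (\<beta> * real n) * (C1 * real n) / c2"
    using m c2 by (intro divide_right_mono mult_left_mono) auto
  finally have "2 * R * (1 / \<delta>) \<le> 2 * real n powr C * (exp (\<beta> * real n) * (C1 * real n) / c2)"
    using R \<delta> by (intro mult_mono) auto
  then have "x \<le> 2 * real n powr C * (exp (\<beta> * real n) * (C1 * real n) / c2) + 1"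
    unfolding x_def by simp
  also have "\<dots> \<le> exp (\<beta> * real n) * (2 * real n powr C * (C1 * real n) / c2 + 1)"
    using \<beta> by (simp add: algebra_simps)
  also have "\<dots> \<le> exp (\<beta> * real n) * exp (2 * real n)"
    using poly_exp by simp
  also have "\<dots> = exp ((\<beta> + 2) * real n)" by (simp add: exp_add[symmetric] algebra_simps)
  finally have "ln x \<le> ln (exp ((\<beta> + 2) * real n))" using x by (subst ln_le_cancel_iff) auto
  then have "log 2 x \<le> (\<beta> + 2) * real n / ln 2"
    unfolding log_def by (intro divide_right_mono) simp_all
  then have "real_of_int \<lceil>log 2 x\<rceil> \<le> (\<beta> + 2) * real n / ln 2 + 1"
    using of_int_ceiling_le_add_one[of "log 2 x"] by linarith
  moreover have "0 \<le> log 2 x" using x by simp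
  then have "0 \<le> real_of_int \<lceil>log 2 x\<rceil>" using le_of_int_ceiling order_trans by blast
  ultimately show ?thesis
    unfolding digit_bits_def x_def[symmetric] using m by (intro mult_mono) auto
qed

lemma poly_bounded_digit_bits:
  fixes M :: "nat \<Rightarrow> nat" and R \<delta> :: "nat \<Rightarrow> real"
  assumes M: "(\<lambda>n. real (M n)) \<in> O(\<lambda>n. real n)" and R: "is_poly_growth R"
    and pos: "\<And>n. R n > 0" "\<And>n. \<delta> n > 0" and \<beta>: "\<beta> \<ge> 0"
    and \<delta>: "\<delta> \<in> \<Omega>(\<lambda>n. 1 / (exp (\<beta> * real n) * real (M n)))"
  shows "poly_bounded (\<lambda>n. digit_bits (M n) (R n) (\<delta> n))"
proof -
  obtain C1 where C1: "C1 > 0" and M_le: "eventually (\<lambda>n. real (M n) \<le> C1 * real n) at_top"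
    using M by (elim landau_o.bigE) auto
  obtain c C where "eventually (\<lambda>n. real n powr c \<le> R n \<and> R n \<le> real n powr C) at_top"
    using R unfolding is_poly_growth_def by blast
  then have R_le: "eventually (\<lambda>n. R n \<le> real n powr C) at_top" by (auto elim: eventually_mono)
  obtain c2 where c2: "c2 > 0"
    and \<delta>_ge: "eventually (\<lambda>n. c2 * \<bar>1 / (exp (\<beta> * real n) * real (M n))\<bar> \<le> \<bar>\<delta> n\<bar>) at_top"
    using \<delta> by (elim landau_omega.bigE) auto
  have poly_exp: "eventually (\<lambda>n. 2 * real n powr C * (C1 * real n) / c2 + 1 \<le> exp (2 * real n)) at_top"
    using C1 c2 by real_asymp
  show ?thesis unfolding poly_bounded_def
  proof (intro exI[of _ 2] bigoI)
    show "eventually (\<lambda>n. norm (digit_bits (M n) (R n) (\<delta> n))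
            \<le> C1 * ((\<beta> + 2) / ln 2 + 1) * norm (real n ^ 2)) at_top"
      using M_le R_le \<delta>_ge poly_exp eventually_ge_at_top[of 1]
    proof eventually_elim
      case (elim n)
      have "digit_bits (M n) (R n) (\<delta> n) \<le> C1 * real n * ((\<beta> + 2) * real n / ln 2 + 1)"
        using elim(3) pos[of n] by (intro digit_bits_le[OF elim(1) _ elim(2) _ _ c2 \<beta> elim(4)]) auto
      moreover have "real n \<le> real n * real n" using elim(5) by (simp add: mult_le_cancel_left1)
      then have "C1 * real n * ((\<beta> + 2) * real n / ln 2 + 1) \<le> C1 * ((\<beta> + 2) / ln 2 + 1) * real n ^ 2"
        using C1 by (simp add: algebra_simps power2_eq_square)
      ultimately show ?case using digit_bits_nonneg[OF pos] by simp
    qed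
  qed
qed

lemma negl_small_combination_and_poly_bounded_digit_bits:
  fixes M :: "nat \<Rightarrow> nat" and D :: "complex set" and G :: "nat \<Rightarrow> real \<Rightarrow> (nat \<Rightarrow> real) \<Rightarrow> bool"
  assumes M_lin: "(\<lambda>n. real (M n)) \<in> \<Theta>(\<lambda>n. real n)" and D: "finite D"
    and G: "\<And>n \<epsilon> J. n \<ge> 1 \<Longrightarrow> G n \<epsilon> J \<Longrightarrow> small_combination D (M n) \<epsilon> J"
  shows "\<exists>\<beta>0>0. \<forall>\<beta>\<ge>\<beta>0. \<forall>R \<delta> :: nat \<Rightarrow> real.
           (\<forall>n. R n > 0 \<and> \<delta> n > 0) \<and> is_poly_growth R \<and>
           \<delta> \<in> \<Theta>(\<lambda>n. 1 / (exp (\<beta> * real n) * real (M n)))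
           \<longrightarrow>
           negl (\<lambda>n. measure (PiM {..<M n} (\<lambda>_. dig_gauss (R n) (\<delta> n)))
                        {J \<in> space (PiM {..<M n} (\<lambda>_. dig_gauss (R n) (\<delta> n))).
                           G n (2 powr (- \<beta> * real n)) J}) \<and>
           poly_bounded (\<lambda>n. digit_bits (M n) (R n) (\<delta> n))"
proof -
  have M: "(\<lambda>n. real (M n)) \<in> O(\<lambda>n. real n)" using M_lin by (rule bigthetaD1)
  obtain g where g: "g > 0" "\<And>z. z \<in> D \<Longrightarrow> z \<noteq> 0 \<Longrightarrow> g \<le> cmod z"
    using finite_nonzero_norm_lower_bound[OF D] by blast
  obtain \<beta>0 where \<beta>0: "\<beta>0 > 0" "\<And>\<beta> \<delta>. \<beta> \<ge> \<beta>0 \<Longrightarrow> \<delta> \<in> O(\<lambda>n. exp (- (\<beta> * real n))) \<Longrightarrow>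
      negl (\<lambda>n. real (card D) ^ M n * (2 * 2 powr (- \<beta> * real n) / g + \<delta> n))"
    using negl_combination_term[OF M g(1)] by blast
  show ?thesis
  proof (intro exI[of _ \<beta>0] conjI allI impI \<beta>0(1))
    fix \<beta> and R \<delta> :: "nat \<Rightarrow> real"
    assume \<beta>: "\<beta> \<ge> \<beta>0" and "(\<forall>n. R n > 0 \<and> \<delta> n > 0) \<and> is_poly_growth R \<and>
      \<delta> \<in> \<Theta>(\<lambda>n. 1 / (exp (\<beta> * real n) * real (M n)))"
    then have pos: "\<And>n. R n > 0" "\<And>n. \<delta> n > 0" and R: "is_poly_growth R"
      and \<delta>: "\<delta> \<in> \<Theta>(\<lambda>n. 1 / (exp (\<beta> * real n) * real (M n)))" by auto
    have \<delta>_O: "\<delta> \<in> O(\<lambda>n. exp (- (\<beta> * real n)))"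
      using bigthetaD1[OF \<delta>] inverse_exp_mult_bigo by (rule landau_o.big_trans)
    then have "eventually (\<lambda>n. \<delta> n \<le> 1) at_top"
      using eventually_le_1_if_bigo_exp_neg \<beta> \<beta>0(1) by simp
    then have "negl (\<lambda>n. real (M n) * measure (dig_gauss (R n) (\<delta> n)) {R n, - R n}
                 + real (card D) ^ M n * (2 * 2 powr (- \<beta> * real n) / g + \<delta> n))"
      by (intro negl_add negl_clipping_term[OF M R pos(2)] \<beta>0(2)[OF \<beta> \<delta>_O])
    then show "negl (\<lambda>n. measure (PiM {..<M n} (\<lambda>_. dig_gauss (R n) (\<delta> n)))
        {J \<in> space (PiM {..<M n} (\<lambda>_. dig_gauss (R n) (\<delta> n))). G n (2 powr (- \<beta> * real n)) J})"
    proof (rule negl_mono)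
      show "eventually (\<lambda>n. \<bar>measure (PiM {..<M n} (\<lambda>_. dig_gauss (R n) (\<delta> n)))
          {J \<in> space (PiM {..<M n} (\<lambda>_. dig_gauss (R n) (\<delta> n))). G n (2 powr (- \<beta> * real n)) J}\<bar>
            \<le> real (M n) * measure (dig_gauss (R n) (\<delta> n)) {R n, - R n}
               + real (card D) ^ M n * (2 * 2 powr (- \<beta> * real n) / g + \<delta> n)) at_top"
        using eventually_ge_at_top[of 1]
        by eventually_elim (use G in \<open>auto intro!: measure_small_combination_le[OF D g pos(2)]\<close>)
    qed
    show "poly_bounded (\<lambda>n. digit_bits (M n) (R n) (\<delta> n))"
      using \<beta> \<beta>0(1) by (intro poly_bounded_digit_bits[OF M R pos _ bigthetaD2[OF \<delta>]]) auto
  qed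
qed

theorem lemma3:
  fixes d :: nat
    and T :: "(nat \<times> cmat) set"
    and M :: "nat \<Rightarrow> nat"
    and \<alpha> :: "nat \<Rightarrow> nat \<Rightarrow> nat \<times> cmat"
    and S :: "nat \<Rightarrow> nat \<Rightarrow> nat list"
  defines "h \<equiv> (\<lambda>n i. embed n (S n i) (snd (\<alpha> n i)))"
  assumes d_pos: "d \<ge> 1"
    and T_fin: "finite T"
    and T_props: "\<And>m A. (m, A) \<in> T \<Longrightarrow>
                    m \<le> d \<and> hermitian_op (2 ^ m) A \<and> nondegenerate (2 ^ m) A"
    and M_lin: "(\<lambda>n. real (M n)) \<in> \<Theta>(\<lambda>n. real n)"
    and templ: "\<And>n i. n \<ge> 1 \<Longrightarrow> i < M n \<Longrightarrow> \<alpha> n i \<in> T"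
    and supp: "\<And>n i. n \<ge> 1 \<Longrightarrow> i < M n \<Longrightarrow>
                 distinct (S n i) \<and> set (S n i) \<subseteq> {..<n} \<and> length (S n i) = fst (\<alpha> n i)"
    and csco: "\<And>n. n \<ge> 1 \<Longrightarrow> CSCO (2 ^ n) (M n) (h n)"
  shows "\<exists>\<beta>0>0. \<forall>\<beta>\<ge>\<beta>0. \<forall>R \<delta> :: nat \<Rightarrow> real.
           (\<forall>n. R n > 0 \<and> \<delta> n > 0 \<and> (\<exists>k::nat. odd k \<and> R n / \<delta> n = real k)) \<and>
           is_poly_growth R \<and>
           \<delta> \<in> \<Theta>(\<lambda>n. 1 / (exp (\<beta> * real n) * real (M n)))
           \<longrightarrow>
           negl (\<lambda>n. measure (PiM {..<M n} (\<lambda>_. dig_gauss (R n) (\<delta> n)))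
                        {J \<in> space (PiM {..<M n} (\<lambda>_. dig_gauss (R n) (\<delta> n))).
                           small_gap (2 ^ n) (M n) (h n) (2 powr (- \<beta> * real n)) J}) \<and>
           poly_bounded (\<lambda>n. digit_bits (M n) (R n) (\<delta> n))"
proof -
  obtain D where "finite D" and "\<And>n \<epsilon> J. n \<ge> 1 \<Longrightarrow> small_gap (2 ^ n) (M n) (h n) \<epsilon> J \<Longrightarrow>
      small_combination D (M n) \<epsilon> J"
    using small_gap_imp_small_combination_of_templates[OF T_fin templ supp csco[unfolded h_def]]
    unfolding h_def by metis
  from negl_small_combination_and_poly_bounded_digit_bits[OF M_lin this] show ?thesis
    by (rule ex_forward) auto
qed

end
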